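(* Let $x,y$ be real (or complex) numbers with $x\neq 0$, $y\neq 0$ and $x+y\neq 0$. Then for every nonnegative integer $n$, $$\sum_{k=0}^{n}\binom{n}{k}^{-1}x^ky^{n-k}=x^n+\left(\frac{xy}{x+y}\right)^n(n+1)\sum_{j=0}^{n-1}\frac{\big((j+1)y^{j+2}+y\,x^{j+1}\big)(x+y)^j}{(xy)^{j+1}(j+1)(j+2)}.$$ *)

theory Defs
  imports Complex_Main
begin

end

theory Submission
  imports Defs
begin

text \<open>
  Multiplying the sum \<open>S n = (\<Sum>k\<le>n. x^k y^(n-k) / (n choose k))\<close> by \<open>x y\<close> and splitting
  each coefficient with \<open>1/(n choose k) = (n+1)/(n+2) \<cdot> (1/(n+1 choose k) + 1/(n+1 choose k+1))\<close>
  yields the first-order recurrence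
  \<open>(x + y) S (n+1) = (n+2)/(n+1) \<cdot> x y S n + x^(n+2) + y^(n+2)\<close>.
  The closed form satisfies the same recurrence: with \<open>q = x y / (x + y)\<close> one has
  \<open>(x + y) q^(n+1) = x y q^n\<close>, and the summand added at step \<open>n\<close> produces precisely the
  inhomogeneous terms.
  As \<open>x + y \<noteq> 0\<close>, the recurrence determines the sequence.
\<close>

lemma recurrence_determines_sequence:
  fixes f g :: "nat \<Rightarrow> 'a::idom"
  assumes "c \<noteq> 0" "f 0 = g 0"
    and "\<And>n. c * f (Suc n) = h n (f n)" "\<And>n. c * g (Suc n) = h n (g n)"
  shows "f n = g n"
proof (induction n)
  case (Suc n)
  then have "c * f (Suc n) = c * g (Suc n)" using assms(3,4) by simp
  then show ?case using assms(1) by simp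
qed (rule assms(2))

lemma inverse_binomial_Suc:
  assumes "k \<le> n"
  shows "1 / (of_nat (n choose k) :: 'a::field_char_0) =
    of_nat (n + 1) / of_nat (n + 2) * (1 / of_nat (Suc n choose k) + 1 / of_nat (Suc n choose Suc k))"
proof -
  define c :: 'a where "c = of_nat (n + 1) * of_nat (n choose k)"
  have nonzero: "c \<noteq> 0" "(of_nat (Suc n choose k) :: 'a) \<noteq> 0" "(of_nat (Suc n choose Suc k) :: 'a) \<noteq> 0"
    using assms unfolding c_def by (simp_all only: mult_eq_0_iff of_nat_eq_0_iff) simp_all
  have "(Suc n - k) * (Suc n choose k) = (n + 1) * (n choose k)"
    using binomial_absorb_comp[of "Suc n" k] by simp
  then have "of_nat (Suc n - k) * of_nat (Suc n choose k) = c"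
    unfolding c_def by (metis of_nat_mult)
  then have left: "1 / of_nat (Suc n choose k) = of_nat (Suc n - k) / c"
    using nonzero by (simp add: field_simps)
  have "Suc k * (Suc n choose Suc k) = (n + 1) * (n choose k)"
    using Suc_times_binomial[of k n] by simp
  then have "of_nat (Suc k) * of_nat (Suc n choose Suc k) = c"
    unfolding c_def by (metis of_nat_mult)
  then have right: "1 / of_nat (Suc n choose Suc k) = of_nat (Suc k) / c"
    using nonzero by (simp add: field_simps)
  have "(of_nat (Suc n - k) :: 'a) + of_nat (Suc k) = of_nat (n + 2)"
    using assms by (simp flip: of_nat_add)
  moreover have "(of_nat (n + 2) :: 'a) \<noteq> 0"
    by (simp only: of_nat_eq_0_iff)
  ultimately show ?thesis
    using nonzero unfolding left right c_def add_divide_distrib[symmetric]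
    by (simp add: field_simps del: of_nat_add of_nat_Suc)
qed

definition reciprocal_binomial_sum :: "'a::field_char_0 \<Rightarrow> 'a \<Rightarrow> nat \<Rightarrow> 'a" where
  "reciprocal_binomial_sum x y n = (\<Sum>k=0..n. x ^ k * y ^ (n - k) / of_nat (n choose k))"

lemma reciprocal_binomial_sum_Suc:
  fixes x y :: "'a::field_char_0"
  shows "(x + y) * reciprocal_binomial_sum x y (Suc n) =
    of_nat (n + 2) / of_nat (n + 1) * (x * y * reciprocal_binomial_sum x y n) + x ^ (n + 2) + y ^ (n + 2)"
proof -
  let ?S = "reciprocal_binomial_sum x y"
  let ?r = "of_nat (n + 1) / of_nat (n + 2) :: 'a"
  have "x * y * ?S n = (\<Sum>k=0..n. x ^ Suc k * y ^ (Suc n - k) * (1 / of_nat (n choose k)))"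
    unfolding reciprocal_binomial_sum_def by (simp add: sum_distrib_left Suc_diff_le field_simps)
  also have "\<dots> = (\<Sum>k=0..n. ?r * (x ^ Suc k * y ^ (Suc n - k) / of_nat (Suc n choose k)
        + x ^ Suc k * y ^ (Suc n - k) / of_nat (Suc n choose Suc k)))"
    by (intro sum.cong refl, subst inverse_binomial_Suc) (auto simp: divide_inverse ring_distribs mult_ac)
  also have "\<dots> = ?r * ((\<Sum>k=0..n. x ^ Suc k * y ^ (Suc n - k) / of_nat (Suc n choose k))
        + (\<Sum>k=0..n. x ^ Suc k * y ^ (Suc n - k) / of_nat (Suc n choose Suc k)))"
    by (simp only: sum.distrib[symmetric] sum_distrib_left)
  also have "(\<Sum>k=0..n. x ^ Suc k * y ^ (Suc n - k) / of_nat (Suc n choose k)) = x * (?S (Suc n) - x ^ Suc n)"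
    unfolding reciprocal_binomial_sum_def by (simp add: sum.atLeast0_atMost_Suc sum_distrib_left field_simps)
  also have "(\<Sum>k=0..n. x ^ Suc k * y ^ (Suc n - k) / of_nat (Suc n choose Suc k)) = y * (?S (Suc n) - y ^ Suc n)"
  proof -
    have "(\<Sum>k=0..n. x ^ Suc k * y ^ (Suc n - k) / of_nat (Suc n choose Suc k))
        = y * (\<Sum>k=0..n. x ^ Suc k * y ^ (Suc n - Suc k) / of_nat (Suc n choose Suc k))"
      by (simp add: sum_distrib_left Suc_diff_le field_simps)
    also have "(\<Sum>k=0..n. x ^ Suc k * y ^ (Suc n - Suc k) / of_nat (Suc n choose Suc k)) = ?S (Suc n) - y ^ Suc n"
      unfolding reciprocal_binomial_sum_def by (subst sum.atLeast0_atMost_Suc_shift) simp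
    finally show ?thesis .
  qed
  finally have "x * y * ?S n = ?r * (x * (?S (Suc n) - x ^ Suc n) + y * (?S (Suc n) - y ^ Suc n))" .
  moreover have "(of_nat (n + 2) :: 'a) \<noteq> 0" "(of_nat (n + 1) :: 'a) \<noteq> 0"
    by (simp_all only: of_nat_eq_0_iff)
  ultimately show ?thesis
    by (simp add: field_simps del: of_nat_add of_nat_Suc)
qed

definition reciprocal_binomial_closed_form :: "'a::field_char_0 \<Rightarrow> 'a \<Rightarrow> nat \<Rightarrow> 'a" where
  "reciprocal_binomial_closed_form x y n = x ^ n + (x * y / (x + y)) ^ n * of_nat (n + 1) *
      (\<Sum>j=0..<n. ((of_nat (j + 1) * y ^ (j + 2) + y * x ^ (j + 1)) * (x + y) ^ j) /
         ((x * y) ^ (j + 1) * of_nat (j + 1) * of_nat (j + 2)))"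

lemma reciprocal_binomial_closed_form_Suc:
  fixes x y :: "'a::field_char_0"
  assumes "x \<noteq> 0" "y \<noteq> 0" "x + y \<noteq> 0"
  shows "(x + y) * reciprocal_binomial_closed_form x y (Suc n) =
    of_nat (n + 2) / of_nat (n + 1) * (x * y * reciprocal_binomial_closed_form x y n) + x ^ (n + 2) + y ^ (n + 2)"
proof -
  let ?R = "reciprocal_binomial_closed_form x y"
  define q where "q = x * y / (x + y)"
  define t where "t = (\<lambda>j. ((of_nat (j + 1) * y ^ (j + 2) + y * x ^ (j + 1)) * (x + y) ^ j) /
         ((x * y) ^ (j + 1) * of_nat (j + 1) * (of_nat (j + 2) :: 'a)))"
  define A where "A = (\<lambda>m. \<Sum>j=0..<m. t j)"
  have R_eq: "?R m = x ^ m + q ^ m * of_nat (m + 1) * A m" for m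
    unfolding reciprocal_binomial_closed_form_def q_def A_def t_def ..
  have nonzero: "(of_nat (n + 1) :: 'a) \<noteq> 0" "(x * y) ^ n \<noteq> 0" "(x + y) ^ n \<noteq> 0"
    using assms by (simp_all only: of_nat_eq_0_iff) simp_all
  have q_Suc: "(x + y) * q ^ (n + 1) = x * y * q ^ n"
    using assms unfolding q_def by (simp add: mult.assoc[symmetric])
  have last_term: "x * y * q ^ n * of_nat (n + 2) * t n = y * x ^ (n + 1) / of_nat (n + 1) + y ^ (n + 2)"
    using assms nonzero unfolding q_def t_def power_divide
    by (simp add: field_simps del: of_nat_add of_nat_Suc)
  have "(x + y) * ?R (Suc n) = (x + y) * x ^ (n + 1) + ((x + y) * q ^ (n + 1)) * of_nat (n + 2) * (A n + t n)"
    unfolding R_eq A_def by (simp add: algebra_simps)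
  also have "\<dots> = (x + y) * x ^ (n + 1) + x * y * q ^ n * of_nat (n + 2) * A n
      + (y * x ^ (n + 1) / of_nat (n + 1) + y ^ (n + 2))"
    unfolding q_Suc last_term[symmetric] by (simp add: algebra_simps)
  also have "\<dots> = of_nat (n + 2) / of_nat (n + 1) * (x * y * ?R n) + x ^ (n + 2) + y ^ (n + 2)"
    using nonzero unfolding R_eq by (simp add: field_simps del: of_nat_add of_nat_Suc) (simp add: algebra_simps)
  finally show ?thesis .
qed

theorem mainTheorem5:
  fixes x y :: "'a :: field_char_0" and n :: nat
  assumes "x \<noteq> 0" and "y \<noteq> 0" and "x + y \<noteq> 0"
  shows "(\<Sum>k=0..n. x ^ k * y ^ (n - k) / of_nat (n choose k)) =
    x ^ n + (x * y / (x + y)) ^ n * of_nat (n + 1) *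
      (\<Sum>j=0..<n. ((of_nat (j + 1) * y ^ (j + 2) + y * x ^ (j + 1)) * (x + y) ^ j) /
         ((x * y) ^ (j + 1) * of_nat (j + 1) * of_nat (j + 2)))"
proof -
  have "reciprocal_binomial_sum x y n = reciprocal_binomial_closed_form x y n"
  proof (rule recurrence_determines_sequence[where c = "x + y"
        and h = "\<lambda>n s. of_nat (n + 2) / of_nat (n + 1) * (x * y * s) + x ^ (n + 2) + y ^ (n + 2)"])
    show "reciprocal_binomial_sum x y 0 = reciprocal_binomial_closed_form x y 0"
      by (simp add: reciprocal_binomial_sum_def reciprocal_binomial_closed_form_def)
  qed (use assms reciprocal_binomial_sum_Suc reciprocal_binomial_closed_form_Suc in simp_all)
  then show ?thesis
    unfolding reciprocal_binomial_sum_def reciprocal_binomial_closed_form_def .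
qed

end
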